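(* Let $G$ be a finite graph with $n$ vertices such that $\mathrm{Aut}(G)$ is cyclic of order $t$, generated by $\pi$, and let $t=\prod_{i=1}^s p_i^{r_i}$ be the prime factorization of $t$ (distinct primes $p_i$, $r_i\ge1$). Let $P^*=\{\pi^{t/p_1},\pi^{t/p_2},\dots,\pi^{t/p_s}\}$. Then for every positive integer $k$, $$L(G,k)=\sum_{P\subseteq P^*}(-1)^{|P|}N_{\ge}(P).$$
   Context: A $k$-labeling of $G$ is a map $\phi:V(G)\to\{1,\dots,k\}$; an automorphism $\pi$ preserves $\phi$ if $\phi(\pi(v))=\phi(v)$ for all $v$; $\phi$ is distinguishing if only the identity preserves it; $L(G,k)$ is the number of distinguishing $k$-labelings. For $P\subseteq\mathrm{Aut}(G)$, $N_{\ge}(P)$ denotes the number of $k$-labelings of $G$ preserved by every automorphism in $P$ (so $N_{\ge}(\emptyset)=k^n$). *)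

theory Defs
  imports "HOL-Library.FuncSet" "HOL-Computational_Algebra.Primes"
begin

definition graph :: "'a set \<Rightarrow> ('a \<Rightarrow> 'a \<Rightarrow> bool) \<Rightarrow> bool" where
  "graph V E \<longleftrightarrow> finite V \<and> (\<forall>u v. E u v \<longrightarrow> u \<in> V \<and> v \<in> V)
     \<and> (\<forall>u v. E u v \<longrightarrow> E v u) \<and> (\<forall>v. \<not> E v v)"

text \<open>Automorphisms, represented as permutations of V fixing everything outside V
  (so the identity automorphism is id and composition is function composition).\<close>
definition Aut :: "'a set \<Rightarrow> ('a \<Rightarrow> 'a \<Rightarrow> bool) \<Rightarrow> ('a \<Rightarrow> 'a) set" where
  "Aut V E = {\<sigma>. bij_betw \<sigma> V V \<and> (\<forall>x. x \<notin> V \<longrightarrow> \<sigma> x = x)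
               \<and> (\<forall>u\<in>V. \<forall>v\<in>V. E u v \<longleftrightarrow> E (\<sigma> u) (\<sigma> v))}"

definition labelings :: "'a set \<Rightarrow> nat \<Rightarrow> ('a \<Rightarrow> nat) set" where
  "labelings V k = V \<rightarrow>\<^sub>E {1..k}"

definition preserves :: "'a set \<Rightarrow> ('a \<Rightarrow> 'a) \<Rightarrow> ('a \<Rightarrow> nat) \<Rightarrow> bool" where
  "preserves V \<sigma> \<phi> \<longleftrightarrow> (\<forall>v\<in>V. \<phi> (\<sigma> v) = \<phi> v)"

definition distinguishing :: "'a set \<Rightarrow> ('a \<Rightarrow> 'a \<Rightarrow> bool) \<Rightarrow> ('a \<Rightarrow> nat) \<Rightarrow> bool" where
  "distinguishing V E \<phi> \<longleftrightarrow> (\<forall>\<sigma>\<in>Aut V E. preserves V \<sigma> \<phi> \<longrightarrow> \<sigma> = id)"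

definition L :: "'a set \<Rightarrow> ('a \<Rightarrow> 'a \<Rightarrow> bool) \<Rightarrow> nat \<Rightarrow> nat" where
  "L V E k = card {\<phi> \<in> labelings V k. distinguishing V E \<phi>}"

definition N_ge :: "'a set \<Rightarrow> nat \<Rightarrow> ('a \<Rightarrow> 'a) set \<Rightarrow> nat" where
  "N_ge V k P = card {\<phi> \<in> labelings V k. \<forall>\<sigma>\<in>P. preserves V \<sigma> \<phi>}"

end

theory Submission
  imports Defs "HOL-Combinatorics.Cycles"
begin

(* The powers of \<pi> preserving a labeling correspond to a subgroup of Z/t.  If this subgroup
   contains some j with t not dividing j, it also contains gcd(j, t), a proper divisor of t,
   hence a multiple t/p of it for a prime p dividing t.  So a labeling is distinguishing iff
   no element of P* preserves it, and the formula is inclusion-exclusion over P*. *)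

lemma card_avoiding_inclusion_exclusion:
  fixes Q :: "'s \<Rightarrow> 'x \<Rightarrow> bool"
  assumes "finite S" "finite A"
  shows "int (card {x\<in>A. \<forall>s\<in>S. \<not> Q s x}) =
    (\<Sum>P\<in>Pow S. (-1) ^ card P * int (card {x\<in>A. \<forall>s\<in>P. Q s x}))"
proof -
  define G where "G s = {x. Q s x}" for s
  \<comment> \<open>Counting inside the finite set A makes the measure additive on all disjoint sets.\<close>
  have union: "int (card (\<Union>(G ` S) \<inter> A)) =
      (\<Sum>P | P \<subseteq> S \<and> P \<noteq> {}. (-1) ^ (card P + 1) * int (card (\<Inter>(G ` P) \<inter> A)))"
  proof (rule Incl_Excl_UN)
    fix X Y :: "'x set"
    assume "disjnt X Y"
    then show "int (card ((X \<union> Y) \<inter> A)) = int (card (X \<inter> A)) + int (card (Y \<inter> A))"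
      using assms by (simp add: Int_Un_distrib2 card_Un_disjoint disjnt_def disjoint_iff)
  qed (use assms in simp)
  have "{x\<in>A. \<forall>s\<in>S. \<not> Q s x} = A - \<Union>(G ` S) \<inter> A"
    by (auto simp: G_def)
  then have "int (card {x\<in>A. \<forall>s\<in>S. \<not> Q s x}) = int (card A) - int (card (\<Union>(G ` S) \<inter> A))"
    using assms by (simp add: card_Diff_subset of_nat_diff card_mono)
  also have "\<dots> = int (card A) +
      (\<Sum>P | P \<subseteq> S \<and> P \<noteq> {}. (-1) ^ card P * int (card {x\<in>A. \<forall>s\<in>P. Q s x}))"
    unfolding union by (auto simp: sum_negf[symmetric] G_def intro!: sum.cong arg_cong[where f = card])
  also have "\<dots> = (\<Sum>P\<in>Pow S. (-1) ^ card P * int (card {x\<in>A. \<forall>s\<in>P. Q s x}))"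
  proof -
    have "Pow S = insert {} {P. P \<subseteq> S \<and> P \<noteq> {}}"
      by auto
    then show ?thesis
      using assms by simp
  qed
  finally show ?thesis .
qed

lemma funpow_mod_eq:
  assumes "f ^^ d = id"
  shows "f ^^ (n mod d) = f ^^ n"
proof -
  have "f ^^ n = (f ^^ d) ^^ (n div d) \<circ> f ^^ (n mod d)"
    by (metis div_mult_mod_eq funpow_add funpow_mult mult.commute)
  then show ?thesis
    using assms by simp
qed

lemma funpow_eq_id_iff_dvd_period:
  assumes "0 < d" "f ^^ d = id" and minimal: "\<And>m. 0 < m \<Longrightarrow> m < d \<Longrightarrow> f ^^ m \<noteq> id"
  shows "f ^^ n = id \<longleftrightarrow> d dvd n"
proof
  assume "f ^^ n = id"
  then have "f ^^ (n mod d) = id"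
    using funpow_mod_eq[OF assms(2)] by simp
  then have "n mod d = 0"
    using minimal[of "n mod d"] assms(1) by auto
  then show "d dvd n"
    by (simp add: dvd_eq_mod_eq_0)
next
  assume "d dvd n"
  then obtain k where "n = d * k"
    by (rule dvdE)
  then show "f ^^ n = id"
    using assms(2) by (simp flip: funpow_mult)
qed

lemma card_funpow_range_eq_period:
  assumes "inj f" "0 < d" "f ^^ d = id" and minimal: "\<And>m. 0 < m \<Longrightarrow> m < d \<Longrightarrow> f ^^ m \<noteq> id"
  shows "card (range (\<lambda>j. f ^^ j)) = d"
proof -
  have "inj_on (\<lambda>j. f ^^ j) {..<d}"
  proof (rule linorder_inj_onI')
    fix a b assume "b \<in> {..<d}" "a < b"
    show "f ^^ a \<noteq> f ^^ b"
    proof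
      assume "f ^^ a = f ^^ b"
      then have "(f ^^ (b - a)) x = x" for x
        using funpow_diff[OF assms(1)] \<open>a < b\<close> by (metis less_imp_le)
      then have "f ^^ (b - a) = id"
        by auto
      then show False
        using minimal[of "b - a"] \<open>a < b\<close> \<open>b \<in> {..<d}\<close> by (simp add: less_imp_diff_less)
    qed
  qed
  moreover have "range (\<lambda>j. f ^^ j) = (\<lambda>j. f ^^ j) ` {..<d}"
  proof (intro equalityI subsetI)
    fix g assume "g \<in> range (\<lambda>j. f ^^ j)"
    then obtain n where "g = f ^^ (n mod d)"
      using funpow_mod_eq[OF assms(3)] by auto
    then show "g \<in> (\<lambda>j. f ^^ j) ` {..<d}"
      using assms(2) by simp
  qed auto
  ultimately show ?thesis
    by (simp add: card_image)
qed

lemma funpow_eq_id_iff_card_dvd: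
  assumes "permutation f"
  shows "f ^^ n = id \<longleftrightarrow> card (range (\<lambda>j. f ^^ j)) dvd n"
proof -
  define d where "d = (LEAST d. 0 < d \<and> f ^^ d = id)"
  obtain m where "f ^^ m = id" "0 < m"
    by (rule permutation_is_nilpotent[OF assms])
  then have "0 < d \<and> f ^^ d = id"
    unfolding d_def by (intro LeastI[where P = "\<lambda>d. 0 < d \<and> f ^^ d = id"]) simp
  moreover have minimal: "f ^^ m \<noteq> id" if "0 < m" "m < d" for m
    using not_less_Least[of m "\<lambda>d. 0 < d \<and> f ^^ d = id"] that unfolding d_def by blast
  moreover have "inj f"
    using assms by (simp add: permutation_bijective bij_is_inj)
  ultimately have "card (range (\<lambda>j. f ^^ j)) = d"
    using card_funpow_range_eq_period by blast
  then show ?thesis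
    using funpow_eq_id_iff_dvd_period[of d f] \<open>0 < d \<and> f ^^ d = id\<close> minimal by simp
qed

lemma funpow_gcd_is_power:
  assumes "f ^^ t = id"
  obtains x where "f ^^ gcd j t = (f ^^ j) ^^ x"
proof (cases "j = 0")
  case True
  then show ?thesis
    using assms that[of 0] by simp
next
  case False
  then obtain x y where "j * x = t * y + gcd j t"
    using bezout_nat by blast
  then have "(f ^^ j) ^^ x = (f ^^ t) ^^ y \<circ> f ^^ gcd j t"
    by (metis funpow_add funpow_mult)
  then show ?thesis
    using assms by (intro that[of x]) simp
qed

lemma proper_divisor_dvd_div_prime_factor:
  fixes d t :: nat
  assumes "d dvd t" "d \<noteq> t" "t \<noteq> 0"
  obtains p where "p \<in> prime_factors t" "d dvd t div p"
proof -
  obtain q where t: "t = d * q"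
    using assms(1) by (rule dvdE)
  then obtain p where p: "prime p" "p dvd q"
    using assms(2) prime_factor_nat[of q] by auto
  then have "t div p = d * (q div p)"
    using t by (simp add: div_mult_swap)
  moreover have "p \<in> prime_factors t"
    using p t assms(3) by (auto simp: in_prime_factors_iff)
  ultimately show ?thesis
    using that by simp
qed

lemma Aut_permutes: "\<sigma> \<in> Aut V E \<Longrightarrow> \<sigma> permutes V"
  unfolding Aut_def by (auto intro: bij_imp_permutes)

lemma preserves_funpow:
  assumes "\<sigma> permutes V" "preserves V \<sigma> \<phi>"
  shows "preserves V (\<sigma> ^^ m) \<phi>"
proof (induction m)
  case (Suc m)
  then show ?case
    using assms by (simp add: preserves_def permutes_in_image funpow_Suc_right del: funpow.simps(2))
qed (simp add: preserves_def)

lemma preserves_funpow_div_prime_factor: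
  assumes "\<sigma> permutes V" "\<sigma> ^^ t = id" "t \<noteq> 0"
    and "preserves V (\<sigma> ^^ j) \<phi>" "\<not> t dvd j"
  obtains p where "p \<in> prime_factors t" "preserves V (\<sigma> ^^ (t div p)) \<phi>"
proof -
  obtain x where x: "\<sigma> ^^ gcd j t = (\<sigma> ^^ j) ^^ x"
    using assms(2) by (rule funpow_gcd_is_power)
  have gcd_preserves: "preserves V (\<sigma> ^^ gcd j t) \<phi>"
    unfolding x by (rule preserves_funpow[OF permutes_funpow[OF assms(1)] assms(4)])
  have "gcd j t \<noteq> t"
    using assms(5) by (metis gcd_dvd1)
  then obtain p where p: "p \<in> prime_factors t" "gcd j t dvd t div p"
    using assms(3) by (auto intro: proper_divisor_dvd_div_prime_factor[of "gcd j t" t])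
  from p(2) obtain c where "t div p = gcd j t * c"
    by (rule dvdE)
  then have "preserves V (\<sigma> ^^ (t div p)) \<phi>"
    using preserves_funpow[OF permutes_funpow[OF assms(1)] gcd_preserves, of c]
    by (simp add: funpow_mult)
  with p(1) show ?thesis
    by (rule that)
qed

lemma cyclic_Aut_generatorD:
  assumes "finite V" "Aut V E = {\<pi> ^^ j | j. True}"
  shows "\<pi> permutes V" "\<pi> ^^ n = id \<longleftrightarrow> card (Aut V E) dvd n" "card (Aut V E) \<noteq> 0"
proof -
  have Aut: "Aut V E = range (\<lambda>j. \<pi> ^^ j)"
    using assms(2) by auto
  then have "\<pi> \<in> Aut V E"
    using rangeI[of "\<lambda>j. \<pi> ^^ j" 1] by simp
  then show perm: "\<pi> permutes V"
    by (rule Aut_permutes)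
  with assms(1) have "permutation \<pi>"
    by (rule permutes_imp_permutation)
  then show order: "\<pi> ^^ n = id \<longleftrightarrow> card (Aut V E) dvd n" for n
    using funpow_eq_id_iff_card_dvd Aut by simp
  obtain m where "\<pi> ^^ m = id" "0 < m"
    by (rule permutation_is_nilpotent[OF \<open>permutation \<pi>\<close>])
  then show "card (Aut V E) \<noteq> 0"
    using order by auto
qed

lemma distinguishing_iff_cyclic:
  assumes "finite V" "Aut V E = {\<pi> ^^ j | j. True}"
  shows "distinguishing V E \<phi> \<longleftrightarrow>
    (\<forall>p \<in> prime_factors (card (Aut V E)). \<not> preserves V (\<pi> ^^ (card (Aut V E) div p)) \<phi>)"
    (is "_ \<longleftrightarrow> (\<forall>p \<in> prime_factors ?t. _)")
proof
  note perm = cyclic_Aut_generatorD(1)[OF assms]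
    and order = cyclic_Aut_generatorD(2)[OF assms]
    and nonzero = cyclic_Aut_generatorD(3)[OF assms]
  {
    assume dist: "distinguishing V E \<phi>"
    show "\<forall>p \<in> prime_factors ?t. \<not> preserves V (\<pi> ^^ (?t div p)) \<phi>"
    proof
      fix p assume "p \<in> prime_factors ?t"
      then have "0 < ?t div p" "?t div p < ?t"
        using nonzero
        by (auto simp: in_prime_factors_iff dvd_div_eq_0_iff intro!: div_less_dividend prime_gt_1_nat)
      then have "\<pi> ^^ (?t div p) \<noteq> id"
        using order by (auto dest: dvd_imp_le)
      then show "\<not> preserves V (\<pi> ^^ (?t div p)) \<phi>"
        using dist assms(2) unfolding distinguishing_def by auto
    qed
  next
    assume none: "\<forall>p \<in> prime_factors ?t. \<not> preserves V (\<pi> ^^ (?t div p)) \<phi>"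
    show "distinguishing V E \<phi>"
      unfolding distinguishing_def
    proof (intro ballI impI)
      fix \<sigma> assume "\<sigma> \<in> Aut V E" "preserves V \<sigma> \<phi>"
      then obtain j where \<sigma>: "\<sigma> = \<pi> ^^ j" "preserves V (\<pi> ^^ j) \<phi>"
        using assms(2) by auto
      have "?t dvd j"
      proof (rule ccontr)
        assume "\<not> ?t dvd j"
        with perm _ nonzero \<sigma>(2) obtain p
          where "p \<in> prime_factors ?t" "preserves V (\<pi> ^^ (?t div p)) \<phi>"
          by (rule preserves_funpow_div_prime_factor) (simp add: order)
        with none show False
          by blast
      qed
      then show "\<sigma> = id"
        using order \<sigma>(1) by simp
    qed
  }
qed

theorem theorem2:
  fixes V :: "'a set" and E :: "'a \<Rightarrow> 'a \<Rightarrow> bool" and \<pi> :: "'a \<Rightarrow> 'a"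
    and t k :: nat
  assumes "graph V E"
    and "\<pi> \<in> Aut V E"
    and "Aut V E = {\<pi> ^^ j | j. True}"
    and "t = card (Aut V E)"
    and "k \<ge> 1"
  shows "int (L V E k) =
    (\<Sum>P \<in> Pow ((\<lambda>p. \<pi> ^^ (t div p)) ` prime_factors t).
        (-1) ^ card P * int (N_ge V k P))"
proof -
  let ?Pstar = "(\<lambda>p. \<pi> ^^ (t div p)) ` prime_factors t"
  have "finite V"
    using assms(1) by (simp add: graph_def)
  then have "finite (labelings V k)"
    by (simp add: labelings_def finite_PiE)
  moreover have "finite ?Pstar"
    by simp
  moreover have "L V E k = card {\<phi> \<in> labelings V k. \<forall>\<sigma> \<in> ?Pstar. \<not> preserves V \<sigma> \<phi>}"
    unfolding L_def using distinguishing_iff_cyclic[OF \<open>finite V\<close> assms(3)] assms(4) by simp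
  ultimately show ?thesis
    unfolding N_ge_def by (simp only: card_avoiding_inclusion_exclusion)
qed

end
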